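(* Let $(U_i,U_i^0)$, $i\in[m]$, be real random variables and $\mathcal{H}_0\subset[m]$ a set of null indices. Define $G_i=\mathrm{sign}(U_i^0-U_i)\cdot[\exp(-U_i)\vee\exp(-U_i^0)]$, the threshold $$\tau=\inf\Big\{\lambda\in\{|G_i|\}_{i=1}^m:\frac{1+\sum_{i=1}^m\mathbb{I}(G_i\le-\lambda)}{\sum_{i=1}^m\mathbb{I}(G_i\ge\lambda)}\le\alpha\Big\}$$ ($\tau=\infty$ if empty) for a given $\alpha\in(0,1)$, and $e_i=\frac{m\,\mathbb{I}(G_i\ge\tau)}{1+\sum_{j=1}^m\mathbb{I}(G_j\le-\tau)}$. Let $p_i^{U,U^0}(u,v)$ be the conditional density (or mass function) of $(U_i,U_i^0)$ at $(u,v)$ given $(\mathbf{U}_{-i},\mathbf{U}^0_{-i})$, and $p_i^{U^0,U}(u,v)$ that of $(U_i^0,U_i)$ at $(u,v)$ given $(\mathbf{U}_{-i},\mathbf{U}^0_{-i})$, and define the observed KL divergence $\widehat{\mathrm{KL}}_i=\log\{p_i^{U,U^0}(U_i,U_i^0)/p_i^{U^0,U}(U_i,U_i^0)\}$. Then (a) $\mathbb{E}\big[\sum_{i\in\mathcal{H}_0}e_i\big]\le\inf_{\epsilon\ge0}\big\{m\big[e^{\epsilon}+\sum_{i\in\mathcal{H}_0}\mathbb{P}(\widehat{\mathrm{KL}}_i>\epsilon)\big]\big\}$; (b) if the $e$-BH procedure is applied to $e_1,\dots,e_m$ at level $\alpha$, i.e. rejecting $\{i:e_i\ge e_{(\hat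 k)}\}$ with $e_{(1)}\ge\dots\ge e_{(m)}$ and $\hat k=\max\{i:ie_{(i)}/m\ge1/\alpha\}$, its false discovery rate satisfies $\mathrm{FDR}\le\inf_{\epsilon\ge0}\big\{\alpha\big[e^{\epsilon}+\sum_{i\in\mathcal{H}_0}\mathbb{P}(\widehat{\mathrm{KL}}_i>\epsilon)\big]\big\}$.
   Context: For a rejection set $\mathcal{R}$, $\mathrm{FDR}=\mathbb{E}\big[|\mathcal{R}\cap\mathcal{H}_0|/\max\{|\mathcal{R}|,1\}\big]$. $\mathbf{U}_{-i}=(U_k:k\ne i)$, $\mathbf{U}^0_{-i}=(U^0_k:k\ne i)$. *)

theory Defs
  imports "HOL-Probability.Probability"
begin

text \<open>Indices are 1..m. An observation is a family x with x i = (U_i, U^0_i).\<close>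

definition statG :: "real \<Rightarrow> real \<Rightarrow> real" where
  "statG u u0 = sgn (u0 - u) * max (exp (- u)) (exp (- u0))"

text \<open>The ratio condition (1 + #neg)/(#pos) \<le> alpha is written multiplied out,
  so that a zero denominator means ratio = infinity (never \<le> alpha).\<close>
definition tau_set :: "nat \<Rightarrow> real \<Rightarrow> (nat \<Rightarrow> real) \<Rightarrow> real set" where
  "tau_set m \<alpha> G = {t \<in> (\<lambda>i. \<bar>G i\<bar>) ` {1..m}.
      1 + real (card {i \<in> {1..m}. G i \<le> - t}) \<le> \<alpha> * real (card {i \<in> {1..m}. G i \<ge> t})}"

definition tau :: "nat \<Rightarrow> real \<Rightarrow> (nat \<Rightarrow> real) \<Rightarrow> ereal" where
  "tau m \<alpha> G = (if tau_set m \<alpha> G = {} then \<infinity> else ereal (Inf (tau_set m \<alpha> G)))"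

definition evalue :: "nat \<Rightarrow> real \<Rightarrow> (nat \<Rightarrow> real) \<Rightarrow> nat \<Rightarrow> real" where
  "evalue m \<alpha> G i =
     real m * (if ereal (G i) \<ge> tau m \<alpha> G then 1 else 0)
     / (1 + real (card {j \<in> {1..m}. ereal (G j) \<le> - tau m \<alpha> G}))"

definition eord :: "nat \<Rightarrow> (nat \<Rightarrow> real) \<Rightarrow> nat \<Rightarrow> real" where
  "eord m e k = rev (sort (map e [1..<m+1])) ! (k - 1)"

definition eBH_khat_set :: "nat \<Rightarrow> real \<Rightarrow> (nat \<Rightarrow> real) \<Rightarrow> nat set" where
  "eBH_khat_set m \<alpha> e = {k \<in> {1..m}. real k * eord m e k / real m \<ge> 1 / \<alpha>}"

definition eBH :: "nat \<Rightarrow> real \<Rightarrow> (nat \<Rightarrow> real) \<Rightarrow> nat set" where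
  "eBH m \<alpha> e = (if eBH_khat_set m \<alpha> e = {} then {}
     else {i \<in> {1..m}. e i \<ge> eord m e (Max (eBH_khat_set m \<alpha> e))})"

text \<open>Conditional density of the i-th coordinate pair at z given the other coordinates
  of x, computed from a joint density g w.r.t. the product of copies of nu \<Otimes> nu.\<close>
definition cdens :: "real measure \<Rightarrow> ((nat \<Rightarrow> real \<times> real) \<Rightarrow> real) \<Rightarrow> nat
                      \<Rightarrow> (nat \<Rightarrow> real \<times> real) \<Rightarrow> real \<times> real \<Rightarrow> real" where
  "cdens \<nu> g i x z = g (x(i := z)) / (\<integral>w. g (x(i := w)) \<partial>(\<nu> \<Otimes>\<^sub>M \<nu>))"

definition swap_at :: "nat \<Rightarrow> (nat \<Rightarrow> real \<times> real) \<Rightarrow> (nat \<Rightarrow> real \<times> real)" where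
  "swap_at i x = x(i := prod.swap (x i))"

text \<open>log(p/q) in the extended reals (log(p/0) = +inf for p > 0, log 0 = -inf, 0/0 read as 0).\<close>
definition logratio :: "real \<Rightarrow> real \<Rightarrow> ereal" where
  "logratio p q = (if p > 0 \<and> q > 0 then ereal (ln (p / q))
                   else if p > 0 then \<infinity> else if q > 0 then - \<infinity> else 0)"

text \<open>Observed KL: p^{U,U0}_i(U_i,U0_i) / p^{U0,U}_i(U_i,U0_i); the density of the family with
  i-th pair swapped is g \<circ> swap_at i.\<close>
definition obsKL :: "real measure \<Rightarrow> ((nat \<Rightarrow> real \<times> real) \<Rightarrow> real) \<Rightarrow> nat
                      \<Rightarrow> (nat \<Rightarrow> real \<times> real) \<Rightarrow> ereal" where
  "obsKL \<nu> f i x = logratio (cdens \<nu> f i x (x i)) (cdens \<nu> (f \<circ> swap_at i) i x (x i))"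

end

theory Submission
  imports Defs
begin

text \<open>For a null index \<open>i\<close> let \<open>T_i\<close> be the threshold computed after replacing \<open>G_i\<close>
  by \<open>|G_i|\<close> (\<open>tau_loo\<close>). When \<open>G_i \<ge> \<tau>\<close> the two thresholds agree, so
  \<open>e_i \<le> m A_i\<close> with \<open>A_i = 1{G_i \<ge> T_i} / (1 + #{j \<noteq> i. G_j \<le> -T_i})\<close> (\<open>loo_pos_ratio\<close>).
  Swapping the pair \<open>(U_i, U_i^0)\<close> only flips the sign of \<open>G_i\<close>, which turns \<open>A_i\<close> into
  the analogous \<open>B_i\<close> with indicator \<open>1{G_i \<le> -T_i}\<close> (\<open>loo_neg_ratio\<close>). All indices with
  \<open>G_i \<le> -T_i\<close> share one threshold, hence \<open>\<Sum>_i B_i \<le> 1\<close>. Away from \<open>{KL_i > \<epsilon>}\<close> the swap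
  changes the joint density by a factor at most \<open>e^\<epsilon>\<close>, so \<open>E A_i \<le> e^\<epsilon> E B_i + P(KL_i > \<epsilon>)\<close>,
  and summing over the nulls gives (a). For (b), the false discovery proportion of e-BH is at most
  \<open>\<alpha>/m \<Sum>_{i \<in> H0} e_i\<close>.\<close>

lemma finite_tau_set: "finite (tau_set m \<alpha> G)"
  unfolding tau_set_def by simp

lemma tau_eq_erealD:
  assumes "tau m \<alpha> G = ereal t"
  shows "t \<in> tau_set m \<alpha> G" "0 \<le> t"
proof -
  have "tau_set m \<alpha> G \<noteq> {}" and "t = Inf (tau_set m \<alpha> G)"
    using assms unfolding tau_def by (auto split: if_splits)
  then show t: "t \<in> tau_set m \<alpha> G"
    using finite_tau_set by (simp add: cInf_eq_Min)
  then show "0 \<le> t"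
    unfolding tau_set_def by auto
qed

lemma tau_le:
  assumes "t \<in> tau_set m \<alpha> G"
  shows "tau m \<alpha> G \<le> ereal t"
  using assms finite_tau_set unfolding tau_def by (auto intro!: cInf_lower bdd_below_finite)

lemma tau_nonneg: "0 \<le> tau m \<alpha> G"
  using tau_eq_erealD(2) by (cases "tau m \<alpha> G") (auto simp: tau_def split: if_splits)

lemma tau_cong:
  assumes "\<And>j. j \<in> {1..m} \<Longrightarrow> G j = G' j"
  shows "tau m \<alpha> G = tau m \<alpha> G'"
proof -
  have "(\<lambda>j. \<bar>G j\<bar>) ` {1..m} = (\<lambda>j. \<bar>G' j\<bar>) ` {1..m}"
    using assms by (intro image_cong) auto
  moreover have "{j \<in> {1..m}. G j \<le> - t} = {j \<in> {1..m}. G' j \<le> - t}"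
    and "{j \<in> {1..m}. t \<le> G j} = {j \<in> {1..m}. t \<le> G' j}" for t
    using assms by auto
  ultimately show ?thesis
    unfolding tau_def tau_set_def by (simp only:)
qed

definition tau_loo :: "nat \<Rightarrow> real \<Rightarrow> (nat \<Rightarrow> real) \<Rightarrow> nat \<Rightarrow> ereal" where
  "tau_loo m \<alpha> G i = tau m \<alpha> (G(i := \<bar>G i\<bar>))"

definition loo_neg_count :: "nat \<Rightarrow> real \<Rightarrow> (nat \<Rightarrow> real) \<Rightarrow> nat \<Rightarrow> nat" where
  "loo_neg_count m \<alpha> G i = card {j \<in> {1..m} - {i}. ereal (G j) \<le> - tau_loo m \<alpha> G i}"

definition loo_pos_ratio :: "nat \<Rightarrow> real \<Rightarrow> (nat \<Rightarrow> real) \<Rightarrow> nat \<Rightarrow> real" where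
  "loo_pos_ratio m \<alpha> G i =
     of_bool (tau_loo m \<alpha> G i \<le> ereal (G i)) / (1 + real (loo_neg_count m \<alpha> G i))"

definition loo_neg_ratio :: "nat \<Rightarrow> real \<Rightarrow> (nat \<Rightarrow> real) \<Rightarrow> nat \<Rightarrow> real" where
  "loo_neg_ratio m \<alpha> G i =
     of_bool (ereal (G i) \<le> - tau_loo m \<alpha> G i) / (1 + real (loo_neg_count m \<alpha> G i))"

lemma loo_pos_ratio_nonneg: "0 \<le> loo_pos_ratio m \<alpha> G i"
  unfolding loo_pos_ratio_def by simp

lemma loo_pos_ratio_le_1: "loo_pos_ratio m \<alpha> G i \<le> 1"
  unfolding loo_pos_ratio_def by simp

lemma loo_neg_ratio_nonneg: "0 \<le> loo_neg_ratio m \<alpha> G i"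
  unfolding loo_neg_ratio_def by simp

lemma loo_pos_ratio_cong:
  assumes "\<And>j. j \<in> {1..m} \<Longrightarrow> G j = G' j" and "i \<in> {1..m}"
  shows "loo_pos_ratio m \<alpha> G i = loo_pos_ratio m \<alpha> G' i"
proof -
  have "tau_loo m \<alpha> G i = tau_loo m \<alpha> G' i"
    unfolding tau_loo_def using assms by (intro tau_cong) auto
  moreover have "loo_neg_count m \<alpha> G i = loo_neg_count m \<alpha> G' i"
    unfolding loo_neg_count_def using assms \<open>tau_loo m \<alpha> G i = tau_loo m \<alpha> G' i\<close>
    by (auto intro!: arg_cong[where f = card])
  ultimately show ?thesis
    unfolding loo_pos_ratio_def using assms by simp
qed

lemma evalue_le_loo_pos_ratio:
  assumes "i \<in> {1..m}"
  shows "evalue m \<alpha> G i \<le> real m * loo_pos_ratio m \<alpha> G i"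
proof (cases "tau m \<alpha> G \<le> ereal (G i)")
  case True
  have "G i \<ge> 0"
    using True tau_nonneg[of m \<alpha> G] by (metis ereal_less_eq(5) order.trans)
  then have tau: "tau_loo m \<alpha> G i = tau m \<alpha> G"
    unfolding tau_loo_def by simp
  have "loo_neg_count m \<alpha> G i \<le> card {j \<in> {1..m}. ereal (G j) \<le> - tau m \<alpha> G}"
    unfolding loo_neg_count_def tau by (intro card_mono) auto
  then have "real m / (1 + real (card {j \<in> {1..m}. ereal (G j) \<le> - tau m \<alpha> G}))
      \<le> real m / (1 + real (loo_neg_count m \<alpha> G i))"
    by (intro divide_left_mono) auto
  then show ?thesis
    unfolding evalue_def loo_pos_ratio_def tau using True by simp
qed (simp add: evalue_def loo_pos_ratio_nonneg)

lemma loo_pos_ratio_flip: "loo_pos_ratio m \<alpha> G i = loo_neg_ratio m \<alpha> (G(i := - G i)) i"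
proof -
  have tau: "tau_loo m \<alpha> (G(i := - G i)) i = tau_loo m \<alpha> G i"
    unfolding tau_loo_def by simp
  have "loo_neg_count m \<alpha> (G(i := - G i)) i = loo_neg_count m \<alpha> G i"
    unfolding loo_neg_count_def tau by (auto intro!: arg_cong[where f = card])
  moreover have "(ereal (- G i) \<le> - tau_loo m \<alpha> G i) = (tau_loo m \<alpha> G i \<le> ereal (G i))"
    by (metis ereal_minus_le_minus ereal_uminus_uminus uminus_ereal.simps(1))
  ultimately show ?thesis
    unfolding loo_pos_ratio_def loo_neg_ratio_def tau by simp
qed

lemma card_le_card_transpose:
  assumes "finite A" "i \<in> A" "k \<in> A"
    and "\<And>j. j \<in> A \<Longrightarrow> P j \<Longrightarrow> Q (Transposition.transpose i k j)"
  shows "card {j \<in> A. P j} \<le> card {j \<in> A. Q j}"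
proof (rule card_inj_on_le)
  show "inj_on (Transposition.transpose i k) {j \<in> A. P j}"
    by simp
  show "Transposition.transpose i k ` {j \<in> A. P j} \<subseteq> {j \<in> A. Q j}"
    using assms transpose_image_eq[of i A k] by blast
qed (use assms in simp)

text \<open>Exchanging the roles of \<open>i\<close> and \<open>k\<close> maps the counts for one leave-one-out vector onto
  those of the other, so a threshold admissible for \<open>i\<close> stays admissible for \<open>k\<close>.\<close>
lemma tau_loo_le_of_neg:
  assumes "i \<in> {1..m}" "k \<in> {1..m}" "0 < \<alpha>"
    and t: "t \<in> tau_set m \<alpha> (G(i := \<bar>G i\<bar>))"
    and "G i \<le> - t" "G k < - t"
  shows "tau_loo m \<alpha> G k \<le> ereal t"
proof -
  let ?Gi = "G(i := \<bar>G i\<bar>)" and ?Gk = "G(k := \<bar>G k\<bar>)"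
  let ?\<sigma> = "Transposition.transpose i k"
  have "0 \<le> t"
    using t unfolding tau_set_def by auto
  then have "G k < 0"
    using assms by simp
  have pos: "card {j \<in> {1..m}. t \<le> ?Gi j} \<le> card {j \<in> {1..m}. t \<le> ?Gk j}"
  proof (rule card_le_card_transpose)
    show "t \<le> ?Gk (?\<sigma> j)" if "j \<in> {1..m}" "t \<le> ?Gi j" for j
      using that assms \<open>G k < 0\<close> \<open>0 \<le> t\<close> by (cases "j = i"; cases "j = k") auto
  qed (use assms in auto)
  have neg: "card {j \<in> {1..m}. ?Gk j \<le> - t} \<le> card {j \<in> {1..m}. ?Gi j \<le> - t}"
  proof (rule card_le_card_transpose)
    show "?Gi (?\<sigma> j) \<le> - t" if "j \<in> {1..m}" "?Gk j \<le> - t" for j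
      using that assms \<open>G k < 0\<close> \<open>0 \<le> t\<close> by (cases "j = i"; cases "j = k") auto
  qed (use assms in auto)
  have "1 + real (card {j \<in> {1..m}. ?Gk j \<le> - t}) \<le> 1 + real (card {j \<in> {1..m}. ?Gi j \<le> - t})"
    using neg by simp
  also have "\<dots> \<le> \<alpha> * real (card {j \<in> {1..m}. t \<le> ?Gi j})"
    using t unfolding tau_set_def by simp
  also have "\<dots> \<le> \<alpha> * real (card {j \<in> {1..m}. t \<le> ?Gk j})"
    using pos \<open>0 < \<alpha>\<close> by simp
  moreover have "(\<lambda>j. \<bar>?Gk j\<bar>) ` {1..m} = (\<lambda>j. \<bar>?Gi j\<bar>) ` {1..m}"
    by (intro image_cong) auto
  ultimately have "t \<in> tau_set m \<alpha> ?Gk"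
    using t unfolding tau_set_def by simp
  then show ?thesis
    unfolding tau_loo_def by (rule tau_le)
qed

lemma tau_loo_eq_of_neg:
  assumes "i \<in> {1..m}" "k \<in> {1..m}" "0 < \<alpha>"
    and "ereal (G i) \<le> - tau_loo m \<alpha> G i" "ereal (G k) \<le> - tau_loo m \<alpha> G k"
  shows "tau_loo m \<alpha> G i = tau_loo m \<alpha> G k"
proof -
  have finite: "\<exists>t. tau_loo m \<alpha> G j = ereal t" if "ereal (G j) \<le> - tau_loo m \<alpha> G j" for j
    using that tau_nonneg[of m \<alpha> "G(j := \<bar>G j\<bar>)"] unfolding tau_loo_def
    by (cases "tau m \<alpha> (G(j := \<bar>G j\<bar>))") auto
  obtain ti tk where ti: "tau_loo m \<alpha> G i = ereal ti" and tk: "tau_loo m \<alpha> G k = ereal tk"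
    using finite[OF assms(4)] finite[OF assms(5)] by blast
  have "ti \<in> tau_set m \<alpha> (G(i := \<bar>G i\<bar>))" "tk \<in> tau_set m \<alpha> (G(k := \<bar>G k\<bar>))"
    using ti tk unfolding tau_loo_def by (auto dest: tau_eq_erealD)
  then have "\<not> ti < tk" "\<not> tk < ti"
    using tau_loo_le_of_neg[of i m k \<alpha> ti G] tau_loo_le_of_neg[of k m i \<alpha> tk G] assms ti tk
    by auto
  then show ?thesis
    using ti tk by simp
qed

lemma sum_loo_neg_ratio_le_1:
  assumes "0 < \<alpha>"
  shows "(\<Sum>i\<in>{1..m}. loo_neg_ratio m \<alpha> G i) \<le> 1"
proof -
  define J where "J = {i \<in> {1..m}. ereal (G i) \<le> - tau_loo m \<alpha> G i}"
  have "(\<Sum>i\<in>{1..m}. loo_neg_ratio m \<alpha> G i) = (\<Sum>i\<in>J. loo_neg_ratio m \<alpha> G i)"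
    unfolding J_def by (intro sum.mono_neutral_right) (auto simp: loo_neg_ratio_def)
  also have "\<dots> \<le> 1"
  proof (cases "J = {}")
    case False
    then obtain i0 where "i0 \<in> J"
      by auto
    define K where "K = {j \<in> {1..m}. ereal (G j) \<le> - tau_loo m \<alpha> G i0}"
    have tau_J: "tau_loo m \<alpha> G i = tau_loo m \<alpha> G i0" if "i \<in> J" for i
      using that \<open>i0 \<in> J\<close> tau_loo_eq_of_neg[of i m i0 \<alpha> G] assms unfolding J_def by auto
    then have "J \<subseteq> K"
      unfolding J_def K_def by auto
    have "finite K"
      unfolding K_def by simp
    have "loo_neg_ratio m \<alpha> G i = 1 / real (card K)" if "i \<in> J" for i
    proof -
      have "{j \<in> {1..m} - {i}. ereal (G j) \<le> - tau_loo m \<alpha> G i} = K - {i}"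
        using tau_J[OF that] unfolding K_def by auto
      moreover have "card (K - {i}) + 1 = card K"
        using card_Suc_Diff1[OF \<open>finite K\<close>, of i] that \<open>J \<subseteq> K\<close> by auto
      ultimately show ?thesis
        using that unfolding loo_neg_ratio_def loo_neg_count_def J_def by (simp add: add.commute)
    qed
    then have "(\<Sum>i\<in>J. loo_neg_ratio m \<alpha> G i) = real (card J) / real (card K)"
      by simp
    also have "\<dots> \<le> 1"
      using card_mono[OF \<open>finite K\<close> \<open>J \<subseteq> K\<close>] by (cases "card K = 0") simp_all
    finally show ?thesis .
  qed simp
  finally show ?thesis .
qed

lemma card_ge_eord:
  assumes "1 \<le> k" "k \<le> m"
  shows "k \<le> card {i \<in> {1..m}. eord m e k \<le> e i}"
proof -
  define xs where "xs = rev (sort (map e [1..<m+1]))"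
  define c where "c = eord m e k"
  have "length xs = m"
    by (simp add: xs_def)
  have "c = xs ! (k - 1)"
    by (simp add: c_def eord_def xs_def)
  moreover have "sorted (rev xs)"
    by (simp add: xs_def)
  ultimately have "c \<le> xs ! j" if "j < k" for j
    using that assms \<open>length xs = m\<close> by (auto intro: sorted_rev_nth_mono)
  then have "filter (\<lambda>v. c \<le> v) (take k xs) = take k xs"
    by (auto simp: filter_id_conv in_set_conv_nth)
  then have "k \<le> length (filter (\<lambda>v. c \<le> v) xs)"
    using assms \<open>length xs = m\<close>
    by (metis append_take_drop_id filter_append le_add1 length_append length_take min.absorb2)
  also have "\<dots> = length (filter (\<lambda>v. c \<le> v) (map e [1..<m+1]))"
    unfolding xs_def by (metis mset_filter mset_rev mset_sort size_mset)
  also have "\<dots> = length (filter (\<lambda>i. c \<le> e i) [1..<m+1])"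
    by (simp add: filter_map comp_def)
  also have "\<dots> = card (set (filter (\<lambda>i. c \<le> e i) [1..<m+1]))"
    by (rule distinct_card[symmetric]) simp
  also have "set (filter (\<lambda>i. c \<le> e i) [1..<m+1]) = {i \<in> {1..m}. c \<le> e i}"
    by auto
  finally show ?thesis
    unfolding c_def .
qed

lemma eBH_fdp_le:
  assumes "0 < \<alpha>" "H0 \<subseteq> {1..m}" "\<And>i. 0 \<le> e i"
  shows "real (card (eBH m \<alpha> e \<inter> H0)) / real (max (card (eBH m \<alpha> e)) 1)
    \<le> \<alpha> / real m * (\<Sum>i\<in>H0. e i)"
proof (cases "eBH_khat_set m \<alpha> e = {}")
  case True
  then show ?thesis
    using assms by (simp add: eBH_def sum_nonneg)
next
  case False
  define k where "k = Max (eBH_khat_set m \<alpha> e)"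
  define R where "R = {i \<in> {1..m}. eord m e k \<le> e i}"
  have "k \<in> eBH_khat_set m \<alpha> e"
    unfolding k_def by (rule Max_in) (use False in \<open>simp_all add: eBH_khat_set_def\<close>)
  then have k: "1 \<le> k" "k \<le> m" and k_rejects: "1 / \<alpha> \<le> real k * eord m e k / real m"
    unfolding eBH_khat_set_def by auto
  have "eBH m \<alpha> e = R"
    unfolding eBH_def R_def k_def using False by simp
  have "k \<le> card R"
    unfolding R_def using k by (rule card_ge_eord)
  have per_rejection: "1 / real (card R) \<le> \<alpha> / real m * e i" if "i \<in> R" for i
  proof -
    have "1 / real (card R) \<le> 1 / real k"
      using \<open>k \<le> card R\<close> k by (simp add: frac_le)
    also have "\<dots> \<le> \<alpha> / real m * eord m e k"
      using k_rejects k \<open>0 < \<alpha>\<close> by (simp add: field_simps)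
    also have "\<dots> \<le> \<alpha> / real m * e i"
      using that \<open>0 < \<alpha>\<close> unfolding R_def by (intro mult_left_mono) auto
    finally show ?thesis .
  qed
  have "max (card R) 1 = card R"
    using \<open>k \<le> card R\<close> k by simp
  then have "real (card (eBH m \<alpha> e \<inter> H0)) / real (max (card (eBH m \<alpha> e)) 1)
      = (\<Sum>i\<in>R \<inter> H0. 1 / real (card R))"
    using \<open>eBH m \<alpha> e = R\<close> by simp
  also have "\<dots> \<le> (\<Sum>i\<in>R \<inter> H0. \<alpha> / real m * e i)"
    using per_rejection by (intro sum_mono) auto
  also have "\<dots> \<le> (\<Sum>i\<in>H0. \<alpha> / real m * e i)"
    using assms by (intro sum_mono2) (auto intro: finite_subset)
  finally show ?thesis
    by (simp add: sum_distrib_left)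
qed

lemma eBH_fdp_le_sum_bound:
  assumes "0 < \<alpha>" "H0 \<subseteq> {1..m}" "\<And>i. 0 \<le> e i"
    and e_le: "\<And>i. i \<in> H0 \<Longrightarrow> e i \<le> real m * a i" and "\<And>i. 0 \<le> a i"
  shows "real (card (eBH m \<alpha> e \<inter> H0)) / real (max (card (eBH m \<alpha> e)) 1) \<le> \<alpha> * (\<Sum>i\<in>H0. a i)"
proof -
  have "real (card (eBH m \<alpha> e \<inter> H0)) / real (max (card (eBH m \<alpha> e)) 1) \<le> \<alpha> / real m * (\<Sum>i\<in>H0. e i)"
    using assms(1-3) by (rule eBH_fdp_le)
  also have "\<dots> \<le> \<alpha> / real m * (real m * (\<Sum>i\<in>H0. a i))"
    unfolding sum_distrib_left using e_le \<open>0 < \<alpha>\<close> by (intro mult_left_mono sum_mono) auto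
  also have "\<dots> \<le> \<alpha> * (\<Sum>i\<in>H0. a i)"
    using assms(1,5) by (cases "m = 0") (auto simp: sum_nonneg)
  finally show ?thesis .
qed

lemma statG_swap: "statG v u = - statG u v"
  unfolding statG_def
  by (subst minus_diff_eq[symmetric, of v u]) (simp only: sgn_minus mult_minus_left max.commute)

definition statGs :: "(nat \<Rightarrow> real \<times> real) \<Rightarrow> nat \<Rightarrow> real" where
  "statGs x j = statG (fst (x j)) (snd (x j))"

lemma statGs_swap_at: "statGs (swap_at i x) = (statGs x)(i := - statGs x i)"
  unfolding statGs_def swap_at_def by (auto simp: statG_swap[of "fst (x i)"])

lemma loo_pos_ratio_swap_at:
  "loo_pos_ratio m \<alpha> (statGs x) i = loo_neg_ratio m \<alpha> (statGs (swap_at i x)) i"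
  by (simp add: statGs_swap_at loo_pos_ratio_flip)

lemma evalue_le_loo_pos_ratio_statGs:
  assumes "i \<in> {1..m}"
  shows "evalue m \<alpha> (\<lambda>j. statG (U j) (U0 j)) i
    \<le> real m * loo_pos_ratio m \<alpha> (statGs (\<lambda>j\<in>{1..m}. (U j, U0 j))) i"
proof -
  have "loo_pos_ratio m \<alpha> (\<lambda>j. statG (U j) (U0 j)) i
      = loo_pos_ratio m \<alpha> (statGs (\<lambda>j\<in>{1..m}. (U j, U0 j))) i"
    by (rule loo_pos_ratio_cong[OF _ assms]) (simp add: statGs_def)
  then show ?thesis
    using evalue_le_loo_pos_ratio[OF assms] by metis
qed

lemma swap_at_swap_at [simp]: "swap_at i (swap_at i x) = x"
  unfolding swap_at_def by auto

lemma tau_eq_INF: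
  "tau m \<alpha> G = (INF j\<in>{1..m}.
     if 1 + real (card {k \<in> {1..m}. G k \<le> - \<bar>G j\<bar>}) \<le> \<alpha> * real (card {k \<in> {1..m}. \<bar>G j\<bar> \<le> G k})
     then ereal \<bar>G j\<bar> else \<infinity>)"
  (is "_ = (INF j\<in>_. ?F j)")
proof -
  have F: "?F j = (if \<bar>G j\<bar> \<in> tau_set m \<alpha> G then ereal \<bar>G j\<bar> else \<infinity>)" if "j \<in> {1..m}" for j
    using that unfolding tau_set_def by auto
  show ?thesis
  proof (rule antisym)
    show "(INF j\<in>{1..m}. ?F j) \<le> tau m \<alpha> G"
    proof (cases "tau m \<alpha> G")
      case (real t)
      then have "t \<in> tau_set m \<alpha> G"
        by (rule tau_eq_erealD)
      then obtain j where "j \<in> {1..m}" "t = \<bar>G j\<bar>"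
        unfolding tau_set_def by auto
      then show ?thesis
        using F[of j] \<open>t \<in> tau_set m \<alpha> G\<close> real by (intro INF_lower2[of j]) auto
    qed (use tau_nonneg in auto)
    show "tau m \<alpha> G \<le> (INF j\<in>{1..m}. ?F j)"
    proof (rule INF_greatest)
      show "tau m \<alpha> G \<le> ?F j" if "j \<in> {1..m}" for j
        using F[OF that] tau_le[of "\<bar>G j\<bar>" m \<alpha> G] by simp
    qed
  qed
qed

lemma borel_measurable_card_filter [measurable (raw)]:
  assumes "finite A" and "\<And>k. k \<in> A \<Longrightarrow> Measurable.pred M (P k)"
  shows "(\<lambda>x. real (card {k \<in> A. P k x})) \<in> borel_measurable M"
proof -
  have "(\<lambda>x. \<Sum>k\<in>A. of_bool (P k x) :: real) \<in> borel_measurable M"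
    using assms(2) by measurable
  moreover have "{k \<in> A. P k x} = A \<inter> {k. P k x}" for x
    by auto
  ultimately show ?thesis
    using assms(1) by simp
qed

lemma borel_measurable_tau:
  assumes [measurable]: "\<And>j. j \<in> {1..m} \<Longrightarrow> (\<lambda>x. H x j) \<in> borel_measurable M"
  shows "(\<lambda>x. tau m \<alpha> (H x)) \<in> borel_measurable M"
  unfolding tau_eq_INF by measurable

lemma borel_measurable_tau_loo:
  assumes [measurable]: "\<And>j. j \<in> {1..m} \<Longrightarrow> (\<lambda>x. H x j) \<in> borel_measurable M"
    and "i \<in> {1..m}"
  shows "(\<lambda>x. tau_loo m \<alpha> (H x) i) \<in> borel_measurable M"
  unfolding tau_loo_def
proof (rule borel_measurable_tau)
  show "(\<lambda>x. ((H x)(i := \<bar>H x i\<bar>)) j) \<in> borel_measurable M" if "j \<in> {1..m}" for j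
    using that assms(2) by (cases "j = i") simp_all
qed

lemma borel_measurable_loo_ratios:
  assumes [measurable]: "\<And>j. j \<in> {1..m} \<Longrightarrow> (\<lambda>x. H x j) \<in> borel_measurable M"
    and "i \<in> {1..m}"
  shows "(\<lambda>x. loo_pos_ratio m \<alpha> (H x) i) \<in> borel_measurable M"
    and "(\<lambda>x. loo_neg_ratio m \<alpha> (H x) i) \<in> borel_measurable M"
proof -
  note assms(1)[OF assms(2), measurable] borel_measurable_tau_loo[OF assms, measurable]
  have [measurable]: "(\<lambda>x. real (loo_neg_count m \<alpha> (H x) i)) \<in> borel_measurable M"
    unfolding loo_neg_count_def by measurable
  show "(\<lambda>x. loo_pos_ratio m \<alpha> (H x) i) \<in> borel_measurable M"
    unfolding loo_pos_ratio_def by measurable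
  show "(\<lambda>x. loo_neg_ratio m \<alpha> (H x) i) \<in> borel_measurable M"
    unfolding loo_neg_ratio_def by measurable
qed

lemma borel_measurable_statGs:
  assumes [measurable_cong]: "sets \<nu> = sets borel" and "j \<in> {1..m}"
  shows "(\<lambda>x. statGs x j) \<in> borel_measurable (PiM {1..m} (\<lambda>_. \<nu> \<Otimes>\<^sub>M \<nu>))"
  unfolding statGs_def statG_def using assms(2) by measurable

lemma logratio_le_imp_le_exp_mult:
  assumes "0 \<le> p" "0 \<le> q" "logratio p q \<le> ereal \<epsilon>"
  shows "p \<le> exp \<epsilon> * q"
proof -
  consider "p = 0" | "0 < p" "q = 0" | "0 < p" "0 < q"
    using assms(1,2) by fastforce
  then show ?thesis
  proof cases
    case 3
    then have "ln (p / q) \<le> \<epsilon>"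
      using assms(3) by (simp add: logratio_def)
    then have "p / q \<le> exp \<epsilon>"
      using 3 by (metis divide_pos_pos exp_le_cancel_iff exp_ln)
    then show ?thesis
      using 3 by (simp add: divide_le_eq)
  qed (use assms in \<open>simp_all add: logratio_def\<close>)
qed

lemma borel_measurable_logratio [measurable]:
  assumes [measurable]: "p \<in> borel_measurable M" "q \<in> borel_measurable M"
  shows "(\<lambda>x. logratio (p x) (q x)) \<in> borel_measurable M"
  unfolding logratio_def by measurable

lemma measurable_prod_swap [measurable]: "prod.swap \<in> M1 \<Otimes>\<^sub>M M2 \<rightarrow>\<^sub>M M2 \<Otimes>\<^sub>M M1"
proof -
  have "prod.swap = (\<lambda>(x, y). (y, x))"
    by (simp add: fun_eq_iff)
  then show ?thesis
    using measurable_pair_swap' by metis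
qed

lemma (in pair_sigma_finite) nn_integral_pair_swap:
  assumes "g \<in> borel_measurable (M1 \<Otimes>\<^sub>M M2)"
  shows "(\<integral>\<^sup>+w. g (prod.swap w) \<partial>(M2 \<Otimes>\<^sub>M M1)) = integral\<^sup>N (M1 \<Otimes>\<^sub>M M2) g"
  using assms by (subst distr_pair_swap) (auto simp: nn_integral_distr prod.swap_def case_prod_beta)

locale pair_density =
  fixes \<nu> :: "real measure" and m :: nat and f :: "(nat \<Rightarrow> real \<times> real) \<Rightarrow> real"
  assumes sigma_finite_\<nu>: "sigma_finite_measure \<nu>"
    and sets_\<nu> [measurable_cong]: "sets \<nu> = sets borel"
    and f_nonneg: "\<And>x. 0 \<le> f x"
    and f_measurable [measurable]: "f \<in> borel_measurable (PiM {1..m} (\<lambda>_. \<nu> \<Otimes>\<^sub>M \<nu>))"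
    and nn_integral_f_finite: "(\<integral>\<^sup>+x. ennreal (f x) \<partial>PiM {1..m} (\<lambda>_. \<nu> \<Otimes>\<^sub>M \<nu>)) \<noteq> \<infinity>"
begin

abbreviation "N \<equiv> \<nu> \<Otimes>\<^sub>M \<nu>"
abbreviation "Nm \<equiv> PiM {1..m} (\<lambda>_. N)"

sublocale N: pair_sigma_finite \<nu> \<nu>
  by (simp add: pair_sigma_finite_def sigma_finite_\<nu>)

sublocale Nm: product_sigma_finite "\<lambda>_::nat. N"
  by (simp add: product_sigma_finite_def N.P.sigma_finite_measure_axioms)

lemma measurable_update:
  assumes "insert i I = {1..m}"
  shows "(\<lambda>(x, w). x(i := w)) \<in> PiM I (\<lambda>_. N) \<Otimes>\<^sub>M N \<rightarrow>\<^sub>M Nm"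
  using measurable_add_dim[of i I "\<lambda>_. N"] assms by simp

lemma measurable_swap_at:
  assumes "i \<in> {1..m}"
  shows "swap_at i \<in> Nm \<rightarrow>\<^sub>M Nm"
proof -
  have "(\<lambda>x. (x, prod.swap (x i))) \<in> Nm \<rightarrow>\<^sub>M Nm \<Otimes>\<^sub>M N"
    using assms by measurable
  from measurable_comp[OF this measurable_update[of i "{1..m}"]] show ?thesis
    using assms unfolding swap_at_def[abs_def] by (simp add: comp_def insert_absorb)
qed

lemma nn_integral_Nm_split:
  assumes "i \<in> {1..m}" "g \<in> borel_measurable Nm"
  shows "integral\<^sup>N Nm g = (\<integral>\<^sup>+y. (\<integral>\<^sup>+w. g (y(i := w)) \<partial>N) \<partial>PiM ({1..m} - {i}) (\<lambda>_. N))"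
  using Nm.product_nn_integral_insert[of "{1..m} - {i}" i g] assms by (simp add: insert_absorb)

lemma nn_integral_swap_at:
  assumes "i \<in> {1..m}" "g \<in> borel_measurable Nm"
  shows "(\<integral>\<^sup>+x. g (swap_at i x) \<partial>Nm) = integral\<^sup>N Nm g"
proof -
  have inner: "(\<integral>\<^sup>+w. g (y(i := prod.swap w)) \<partial>N) = (\<integral>\<^sup>+w. g (y(i := w)) \<partial>N)"
    if "y \<in> space (PiM ({1..m} - {i}) (\<lambda>_. N))" for y
  proof (rule N.nn_integral_pair_swap)
    have "(\<lambda>w. y(i := w)) \<in> N \<rightarrow>\<^sub>M Nm"
      using measurable_component_update[OF that, of i] assms by (simp add: insert_absorb)
    then show "(\<lambda>w. g (y(i := w))) \<in> borel_measurable N"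
      using assms(2) by measurable
  qed
  moreover have "(\<lambda>x. g (swap_at i x)) \<in> borel_measurable Nm"
    using measurable_comp[OF measurable_swap_at[OF assms(1)] assms(2)] by (simp add: comp_def)
  ultimately show ?thesis
    using assms by (simp add: nn_integral_Nm_split swap_at_def cong: nn_integral_cong_simp)
qed

definition marginal_density :: "nat \<Rightarrow> (nat \<Rightarrow> real \<times> real) \<Rightarrow> ennreal" where
  "marginal_density i x = (\<integral>\<^sup>+w. ennreal (f (x(i := w))) \<partial>N)"

lemma marginal_density_update [simp]: "marginal_density i (x(i := w)) = marginal_density i x"
  by (simp add: marginal_density_def)

lemma borel_measurable_marginal_density:
  assumes "insert i I = {1..m}"
  shows "marginal_density i \<in> borel_measurable (PiM I (\<lambda>_. N))"
proof -
  have "(\<lambda>p. ennreal (f ((\<lambda>(x, w). x(i := w)) p))) \<in> borel_measurable (PiM I (\<lambda>_. N) \<Otimes>\<^sub>M N)"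
    using measurable_update[OF assms] by measurable
  then show ?thesis
    unfolding marginal_density_def by (intro N.borel_measurable_nn_integral) (simp add: case_prod_beta)
qed

lemma measurable_update_point:
  assumes "insert i I = {1..m}" "y \<in> space (PiM I (\<lambda>_. N))"
  shows "(\<lambda>w. y(i := w)) \<in> N \<rightarrow>\<^sub>M Nm"
  using measurable_comp[OF measurable_Pair1'[OF assms(2)] measurable_update[OF assms(1)]]
  by (simp add: comp_def)

lemma borel_measurable_integral_update:
  fixes g :: "(nat \<Rightarrow> real \<times> real) \<Rightarrow> real"
  assumes "i \<in> {1..m}" "g \<in> borel_measurable Nm"
  shows "(\<lambda>x. \<integral>w. g (x(i := w)) \<partial>N) \<in> borel_measurable Nm"
proof -
  have "(\<lambda>p. g ((\<lambda>(x, w). x(i := w)) p)) \<in> borel_measurable (Nm \<Otimes>\<^sub>M N)"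
    using measurable_update[of i "{1..m}"] assms by (simp add: insert_absorb)
  then show ?thesis
    by (intro N.borel_measurable_lebesgue_integral) (simp add: case_prod_beta)
qed

lemma nn_integral_degenerate_marginal_density:
  assumes "i \<in> {1..m}"
  shows "(\<integral>\<^sup>+x. ennreal (f x) * indicator {x \<in> space Nm. marginal_density i x \<in> {0, \<infinity>}} x \<partial>Nm) = 0"
proof -
  let ?\<Pi> = "PiM ({1..m} - {i}) (\<lambda>_. N)"
  define D where "D = {x \<in> space Nm. marginal_density i x \<in> {0, \<infinity>}}"
  have ins: "insert i ({1..m} - {i}) = {1..m}"
    using assms by auto
  have [measurable]: "marginal_density i \<in> borel_measurable Nm"
    using borel_measurable_marginal_density[of i "{1..m}"] assms by (simp add: insert_absorb)
  have "(\<integral>\<^sup>+x. ennreal (f x) \<partial>Nm) = (\<integral>\<^sup>+y. marginal_density i y \<partial>?\<Pi>)"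
    unfolding marginal_density_def by (rule nn_integral_Nm_split[OF assms]) measurable
  then have "AE y in ?\<Pi>. marginal_density i y \<noteq> \<infinity>"
    using nn_integral_f_finite by (intro nn_integral_PInf_AE borel_measurable_marginal_density[OF ins]) auto
  then have AE_zero: "AE y in ?\<Pi>. (\<integral>\<^sup>+w. ennreal (f (y(i := w))) * indicator D (y(i := w)) \<partial>N) = 0"
  proof (rule AE_mp[OF _ AE_I2], intro impI)
    fix y assume y: "y \<in> space ?\<Pi>" and "marginal_density i y \<noteq> \<infinity>"
    note update [measurable] = measurable_update_point[OF ins y]
    have "(\<integral>\<^sup>+w. ennreal (f (y(i := w))) * indicator D (y(i := w)) \<partial>N)
        = (\<integral>\<^sup>+w. ennreal (f (y(i := w))) * of_bool (marginal_density i y \<in> {0, \<infinity>}) \<partial>N)"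
      using measurable_space[OF update] by (intro nn_integral_cong) (simp add: D_def)
    also have "\<dots> = marginal_density i y * of_bool (marginal_density i y \<in> {0, \<infinity>})"
      unfolding marginal_density_def by (intro nn_integral_multc) measurable
    also have "\<dots> = 0"
      using \<open>marginal_density i y \<noteq> \<infinity>\<close> by auto
    finally show "(\<integral>\<^sup>+w. ennreal (f (y(i := w))) * indicator D (y(i := w)) \<partial>N) = 0" .
  qed
  have [measurable]: "D \<in> sets Nm"
    unfolding D_def by measurable
  have "(\<integral>\<^sup>+x. ennreal (f x) * indicator D x \<partial>Nm)
      = (\<integral>\<^sup>+y. (\<integral>\<^sup>+w. ennreal (f (y(i := w))) * indicator D (y(i := w)) \<partial>N) \<partial>?\<Pi>)"
    by (rule nn_integral_Nm_split[OF assms]) measurable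
  also have "\<dots> = 0"
    by (subst nn_integral_cong_AE[OF AE_zero]) simp_all
  finally show ?thesis
    unfolding D_def .
qed

lemma obsKL_eq_logratio:
  "obsKL \<nu> f i x = logratio (f x / (\<integral>w. f (x(i := w)) \<partial>N))
     (f (swap_at i x) / (\<integral>w. f (swap_at i (x(i := w))) \<partial>N))"
  by (simp add: obsKL_def cdens_def)

lemma borel_measurable_obsKL:
  assumes "i \<in> {1..m}"
  shows "obsKL \<nu> f i \<in> borel_measurable Nm"
proof -
  have [measurable]: "(\<lambda>x. f (swap_at i x)) \<in> borel_measurable Nm"
    using measurable_swap_at[OF assms] by measurable
  note borel_measurable_integral_update[OF assms f_measurable, measurable]
  note borel_measurable_integral_update[OF assms \<open>(\<lambda>x. f (swap_at i x)) \<in> borel_measurable Nm\<close>,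
      measurable]
  show ?thesis
    unfolding obsKL_eq_logratio[abs_def] by measurable
qed

lemma sets_obsKL_less:
  assumes "i \<in> {1..m}"
  shows "{x \<in> space Nm. ereal \<epsilon> < obsKL \<nu> f i x} \<in> sets Nm"
  using borel_measurable_obsKL[OF assms] by (simp add: pred_def[symmetric])

lemma f_le_exp_mult_f_swap_at:
  assumes "i \<in> {1..m}" "x \<in> space Nm" "marginal_density i x \<notin> {0, \<infinity>}" "obsKL \<nu> f i x \<le> ereal \<epsilon>"
  shows "f x \<le> exp \<epsilon> * f (swap_at i x)"
proof -
  define Z where "Z = (\<integral>w. f (x(i := w)) \<partial>N)"
  have [measurable]: "(\<lambda>w. x(i := w)) \<in> N \<rightarrow>\<^sub>M Nm"
    using measurable_update_point[of i "{1..m}" x] assms by (simp add: insert_absorb)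
  have "integrable N (\<lambda>w. f (x(i := w)))"
    using assms(3) by (intro integrableI_nonneg) (auto simp: f_nonneg marginal_density_def less_top)
  then have "marginal_density i x = ennreal Z"
    unfolding marginal_density_def Z_def by (rule nn_integral_eq_integral) (simp add: f_nonneg)
  moreover have "0 \<le> Z"
    unfolding Z_def by (simp add: f_nonneg)
  ultimately have "0 < Z"
    using assms(3) by fastforce
  have "(\<integral>w. f (swap_at i (x(i := w))) \<partial>N) = (\<integral>w. f (x(i := prod.swap w)) \<partial>N)"
    by (simp add: swap_at_def)
  also have "\<dots> = Z"
    unfolding Z_def using N.integral_product_swap[of "\<lambda>w. f (x(i := w))"]
    by (simp add: case_prod_beta' prod.swap_def)
  finally have "obsKL \<nu> f i x = logratio (f x / Z) (f (swap_at i x) / Z)"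
    by (simp add: obsKL_eq_logratio Z_def)
  then have "f x / Z \<le> exp \<epsilon> * (f (swap_at i x) / Z)"
    using assms(4) \<open>0 < Z\<close> f_nonneg by (intro logratio_le_imp_le_exp_mult) simp_all
  then show ?thesis
    using \<open>0 < Z\<close> by (simp add: divide_le_eq)
qed

lemma f_mult_le_swap_at:
  assumes i: "i \<in> {1..m}" and "x \<in> space Nm" "a \<le> 1"
  shows "ennreal (f x) * a \<le> ennreal (exp \<epsilon>) * (ennreal (f (swap_at i x)) * a)
    + ennreal (f x) * indicator {x \<in> space Nm. ereal \<epsilon> < obsKL \<nu> f i x} x
    + ennreal (f x) * indicator {x \<in> space Nm. marginal_density i x \<in> {0, \<infinity>}} x"
    (is "_ \<le> _ + ennreal (f x) * indicator ?K x + ennreal (f x) * indicator ?D x")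
proof (cases "x \<in> ?K \<union> ?D")
  case True
  have "ennreal (f x) * a \<le> ennreal (f x) * 1"
    using \<open>a \<le> 1\<close> by (rule mult_left_mono) simp
  also have "\<dots> \<le> ennreal (f x) * indicator ?K x + ennreal (f x) * indicator ?D x"
    using True by (elim UnE) (simp_all add: add_increasing add_increasing2)
  finally show ?thesis
    unfolding add.assoc by (rule add_increasing[rotated]) simp
next
  case False
  then have "f x \<le> exp \<epsilon> * f (swap_at i x)"
    using assms by (intro f_le_exp_mult_f_swap_at[OF i]) (auto simp: not_less)
  then have "ennreal (f x) \<le> ennreal (exp \<epsilon>) * ennreal (f (swap_at i x))"
    by (simp add: ennreal_mult[symmetric] f_nonneg ennreal_leI)
  then have "ennreal (f x) * a \<le> ennreal (exp \<epsilon>) * (ennreal (f (swap_at i x)) * a)"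
    unfolding mult.assoc[symmetric] by (rule mult_right_mono) simp
  then show ?thesis
    unfolding add.assoc by (rule add_increasing2[rotated]) simp
qed

lemma nn_integral_le_swap_at:
  assumes i: "i \<in> {1..m}" and a [measurable]: "a \<in> borel_measurable Nm" and a_le_1: "\<And>x. a x \<le> 1"
  shows "(\<integral>\<^sup>+x. ennreal (f x) * a x \<partial>Nm)
    \<le> ennreal (exp \<epsilon>) * (\<integral>\<^sup>+x. ennreal (f x) * a (swap_at i x) \<partial>Nm)
      + (\<integral>\<^sup>+x. ennreal (f x) * indicator {x \<in> space Nm. ereal \<epsilon> < obsKL \<nu> f i x} x \<partial>Nm)"
proof -
  define K where "K = {x \<in> space Nm. ereal \<epsilon> < obsKL \<nu> f i x}"
  define D where "D = {x \<in> space Nm. marginal_density i x \<in> {0, \<infinity>}}"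
  have [measurable]: "(\<lambda>x. f (swap_at i x)) \<in> borel_measurable Nm"
    using measurable_swap_at[OF i] by measurable
  have [measurable]: "marginal_density i \<in> borel_measurable Nm"
    using borel_measurable_marginal_density[of i "{1..m}"] i by (simp add: insert_absorb)
  have [measurable]: "D \<in> sets Nm"
    unfolding D_def by measurable
  have [measurable]: "K \<in> sets Nm"
    unfolding K_def by (rule sets_obsKL_less[OF i])
  have "(\<integral>\<^sup>+x. ennreal (f x) * a x \<partial>Nm) \<le> (\<integral>\<^sup>+x. ennreal (exp \<epsilon>) * (ennreal (f (swap_at i x)) * a x)
      + ennreal (f x) * indicator K x + ennreal (f x) * indicator D x \<partial>Nm)"
    unfolding K_def D_def using a_le_1 by (intro nn_integral_mono f_mult_le_swap_at[OF i])
  also have "\<dots> = ennreal (exp \<epsilon>) * (\<integral>\<^sup>+x. ennreal (f (swap_at i x)) * a x \<partial>Nm)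
      + (\<integral>\<^sup>+x. ennreal (f x) * indicator K x \<partial>Nm) + (\<integral>\<^sup>+x. ennreal (f x) * indicator D x \<partial>Nm)"
    \<comment> \<open>without \<open>One_nat_def\<close>, simp rewrites \<open>{1..m}\<close> and then fails on the measurability side goals\<close>
    by (simp add: nn_integral_add nn_integral_cmult del: One_nat_def)
  also have "(\<integral>\<^sup>+x. ennreal (f x) * indicator D x \<partial>Nm) = 0"
    unfolding D_def by (rule nn_integral_degenerate_marginal_density[OF i])
  also have "(\<integral>\<^sup>+x. ennreal (f (swap_at i x)) * a x \<partial>Nm) = (\<integral>\<^sup>+x. ennreal (f x) * a (swap_at i x) \<partial>Nm)"
  proof -
    have "(\<lambda>x. ennreal (f x) * a (swap_at i x)) \<in> borel_measurable Nm"
      using measurable_swap_at[OF i] by measurable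
    from nn_integral_swap_at[OF i this] show ?thesis
      by simp
  qed
  finally show ?thesis
    unfolding K_def by simp
qed

lemma borel_measurable_loo_ratios_statGs:
  assumes "i \<in> {1..m}"
  shows "(\<lambda>x. loo_pos_ratio m \<alpha> (statGs x) i) \<in> borel_measurable Nm"
    and "(\<lambda>x. loo_neg_ratio m \<alpha> (statGs x) i) \<in> borel_measurable Nm"
  using borel_measurable_statGs[OF sets_\<nu>] assms by (auto intro: borel_measurable_loo_ratios)

lemma borel_measurable_sum_loo_pos_ratio:
  assumes "H0 \<subseteq> {1..m}" "X \<in> M \<rightarrow>\<^sub>M Nm"
  shows "(\<lambda>\<omega>. \<Sum>i\<in>H0. loo_pos_ratio m \<alpha> (statGs (X \<omega>)) i) \<in> borel_measurable M"
proof -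
  have [measurable]: "(\<lambda>x. loo_pos_ratio m \<alpha> (statGs x) i) \<in> borel_measurable Nm" if "i \<in> H0" for i
    by (intro borel_measurable_loo_ratios_statGs) (use that assms(1) in blast)
  show ?thesis
    using assms(2) by measurable
qed

lemma nn_integral_sum_loo_pos_ratio_le:
  assumes "0 < \<alpha>" and H0: "H0 \<subseteq> {1..m}"
  shows "(\<integral>\<^sup>+x. ennreal (f x) * ennreal (\<Sum>i\<in>H0. loo_pos_ratio m \<alpha> (statGs x) i) \<partial>Nm)
    \<le> ennreal (exp \<epsilon>) * (\<integral>\<^sup>+x. ennreal (f x) \<partial>Nm)
      + (\<Sum>i\<in>H0. \<integral>\<^sup>+x. ennreal (f x) * indicator {x \<in> space Nm. ereal \<epsilon> < obsKL \<nu> f i x} x \<partial>Nm)"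
proof -
  let ?A = "\<lambda>i x. ennreal (loo_pos_ratio m \<alpha> (statGs x) i)"
  let ?B = "\<lambda>i x. ennreal (loo_neg_ratio m \<alpha> (statGs x) i)"
  let ?K = "\<lambda>i. {x \<in> space Nm. ereal \<epsilon> < obsKL \<nu> f i x}"
  have [measurable]: "?A i \<in> borel_measurable Nm" "?B i \<in> borel_measurable Nm" if "i \<in> H0" for i
  proof -
    have "i \<in> {1..m}"
      using that H0 by blast
    from borel_measurable_loo_ratios_statGs[OF this]
    show "?A i \<in> borel_measurable Nm" "?B i \<in> borel_measurable Nm"
      by (auto intro: measurable_compose[OF _ measurable_ennreal])
  qed
  have "(\<integral>\<^sup>+x. ennreal (f x) * ennreal (\<Sum>i\<in>H0. loo_pos_ratio m \<alpha> (statGs x) i) \<partial>Nm)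
      = (\<integral>\<^sup>+x. (\<Sum>i\<in>H0. ennreal (f x) * ?A i x) \<partial>Nm)"
    by (simp add: sum_distrib_left[symmetric] sum_ennreal loo_pos_ratio_nonneg)
  also have "\<dots> = (\<Sum>i\<in>H0. \<integral>\<^sup>+x. ennreal (f x) * ?A i x \<partial>Nm)"
    by (rule nn_integral_sum) measurable
  also have "\<dots> \<le> (\<Sum>i\<in>H0. ennreal (exp \<epsilon>) * (\<integral>\<^sup>+x. ennreal (f x) * ?B i x \<partial>Nm)
      + (\<integral>\<^sup>+x. ennreal (f x) * indicator (?K i) x \<partial>Nm))"
  proof (rule sum_mono)
    fix i assume "i \<in> H0"
    then have "i \<in> {1..m}"
      using H0 by auto
    have "?A i (swap_at i x) = ?B i x" for x
      by (simp add: loo_pos_ratio_swap_at)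
    with nn_integral_le_swap_at[OF \<open>i \<in> {1..m}\<close>, of "?A i" \<epsilon>] \<open>i \<in> H0\<close>
    show "(\<integral>\<^sup>+x. ennreal (f x) * ?A i x \<partial>Nm) \<le> ennreal (exp \<epsilon>) * (\<integral>\<^sup>+x. ennreal (f x) * ?B i x \<partial>Nm)
      + (\<integral>\<^sup>+x. ennreal (f x) * indicator (?K i) x \<partial>Nm)"
      by (simp add: loo_pos_ratio_le_1 del: One_nat_def)
  qed
  also have "\<dots> = ennreal (exp \<epsilon>) * (\<integral>\<^sup>+x. ennreal (f x) * (\<Sum>i\<in>H0. ?B i x) \<partial>Nm)
      + (\<Sum>i\<in>H0. \<integral>\<^sup>+x. ennreal (f x) * indicator (?K i) x \<partial>Nm)"
    by (simp add: sum.distrib sum_distrib_left nn_integral_sum del: One_nat_def)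
  also have "\<dots> \<le> ennreal (exp \<epsilon>) * (\<integral>\<^sup>+x. ennreal (f x) \<partial>Nm)
      + (\<Sum>i\<in>H0. \<integral>\<^sup>+x. ennreal (f x) * indicator (?K i) x \<partial>Nm)"
  proof -
    have "(\<Sum>i\<in>H0. ?B i x) \<le> 1" for x
    proof -
      have "(\<Sum>i\<in>H0. loo_neg_ratio m \<alpha> (statGs x) i) \<le> (\<Sum>i\<in>{1..m}. loo_neg_ratio m \<alpha> (statGs x) i)"
        using H0 by (intro sum_mono2) (auto simp: loo_neg_ratio_nonneg)
      also have "\<dots> \<le> 1"
        using \<open>0 < \<alpha>\<close> by (rule sum_loo_neg_ratio_le_1)
      finally show ?thesis
        by (simp add: sum_ennreal loo_neg_ratio_nonneg)
    qed
    then show ?thesis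
      by (intro add_mono mult_left_mono nn_integral_mono) (auto intro: mult_left_le)
  qed
  finally show ?thesis .
qed

lemma expectation_sum_loo_pos_ratio_le:
  assumes "prob_space M" and X: "distributed M Nm X (\<lambda>x. ennreal (f x))"
    and "0 < \<alpha>" "H0 \<subseteq> {1..m}"
  shows "(\<integral>\<^sup>+\<omega>. ennreal (\<Sum>i\<in>H0. loo_pos_ratio m \<alpha> (statGs (X \<omega>)) i) \<partial>M)
    \<le> ennreal (exp \<epsilon> + (\<Sum>i\<in>H0. measure M {\<omega> \<in> space M. ereal \<epsilon> < obsKL \<nu> f i (X \<omega>)}))"
proof -
  interpret prob_space M
    by fact
  let ?K = "\<lambda>i. {x \<in> space Nm. ereal \<epsilon> < obsKL \<nu> f i x}"
  have [measurable]: "X \<in> M \<rightarrow>\<^sub>M Nm"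
    using X by (rule distributed_measurable)
  have "(\<integral>\<^sup>+x. ennreal (f x) \<partial>Nm) = 1"
    using distributed_nn_integral[OF X, of "\<lambda>_. 1"] by (simp add: emeasure_space_1)
  moreover have "(\<integral>\<^sup>+x. ennreal (f x) * indicator (?K i) x \<partial>Nm)
      = ennreal (measure M {\<omega> \<in> space M. ereal \<epsilon> < obsKL \<nu> f i (X \<omega>)})" if "i \<in> H0" for i
  proof -
    have "?K i \<in> sets Nm"
      by (intro sets_obsKL_less) (use that assms(4) in blast)
    then have "(\<integral>\<^sup>+x. ennreal (f x) * indicator (?K i) x \<partial>Nm) = emeasure M (X -` ?K i \<inter> space M)"
      by (rule distributed_emeasure[OF X, symmetric])
    also have "X -` ?K i \<inter> space M = {\<omega> \<in> space M. ereal \<epsilon> < obsKL \<nu> f i (X \<omega>)}"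
      using measurable_space[OF \<open>X \<in> M \<rightarrow>\<^sub>M Nm\<close>] by auto
    finally show ?thesis
      by (simp add: emeasure_eq_measure)
  qed
  moreover have "(\<integral>\<^sup>+\<omega>. ennreal (\<Sum>i\<in>H0. loo_pos_ratio m \<alpha> (statGs (X \<omega>)) i) \<partial>M)
      = (\<integral>\<^sup>+x. ennreal (f x) * ennreal (\<Sum>i\<in>H0. loo_pos_ratio m \<alpha> (statGs x) i) \<partial>Nm)"
    by (intro distributed_nn_integral[OF X, symmetric] measurable_compose[OF _ measurable_ennreal]
        borel_measurable_sum_loo_pos_ratio[OF assms(4) measurable_id])
  ultimately show ?thesis
    using nn_integral_sum_loo_pos_ratio_le[OF assms(3,4), of \<epsilon>]
    by (simp add: sum_ennreal ennreal_plus sum_nonneg del: One_nat_def)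
qed

end

lemma pair_density_of_distributed:
  assumes "prob_space M" "sigma_finite_measure \<nu>" "sets \<nu> = sets borel" "\<And>x. 0 \<le> f x"
    and X: "distributed M (PiM {1..m} (\<lambda>_. \<nu> \<Otimes>\<^sub>M \<nu>)) X (\<lambda>x. ennreal (f x))"
  shows "pair_density \<nu> m f"
proof (rule pair_density.intro)
  show "f \<in> borel_measurable (PiM {1..m} (\<lambda>_. \<nu> \<Otimes>\<^sub>M \<nu>))"
    using borel_measurable_enn2real[OF distributed_borel_measurable[OF X]] assms(4) by simp
  have "(\<integral>\<^sup>+x. ennreal (f x) \<partial>PiM {1..m} (\<lambda>_. \<nu> \<Otimes>\<^sub>M \<nu>)) = 1"
    using distributed_nn_integral[OF X, of "\<lambda>_. 1"] prob_space.emeasure_space_1[OF assms(1)] by simp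
  then show "(\<integral>\<^sup>+x. ennreal (f x) \<partial>PiM {1..m} (\<lambda>_. \<nu> \<Otimes>\<^sub>M \<nu>)) \<noteq> \<infinity>"
    by simp
qed (fact assms(2,3,4))+

lemma integral_le_INF_of_nn_integral_bound:
  fixes g S :: "'a \<Rightarrow> real" and B :: "real \<Rightarrow> real"
  assumes "\<And>x. g x \<le> c * S x" "0 \<le> c" "\<And>x. 0 \<le> S x" "S \<in> borel_measurable M"
    and "\<And>\<epsilon>. 0 \<le> \<epsilon> \<Longrightarrow> (\<integral>\<^sup>+x. ennreal (S x) \<partial>M) \<le> ennreal (B \<epsilon>)" "\<And>\<epsilon>. 0 \<le> B \<epsilon>"
  shows "integral\<^sup>L M g \<le> (INF \<epsilon>\<in>{0..}. c * B \<epsilon>)"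
proof (rule cINF_greatest)
  fix \<epsilon> :: real assume "\<epsilon> \<in> {0..}"
  have "(\<integral>\<^sup>+x. ennreal (g x) \<partial>M) \<le> (\<integral>\<^sup>+x. ennreal c * ennreal (S x) \<partial>M)"
    using assms(1-3) by (intro nn_integral_mono) (simp add: ennreal_mult[symmetric] ennreal_leI)
  also have "\<dots> = ennreal c * (\<integral>\<^sup>+x. ennreal (S x) \<partial>M)"
    using assms(4) by (simp add: nn_integral_cmult)
  also have "\<dots> \<le> ennreal c * ennreal (B \<epsilon>)"
    using assms(5) \<open>\<epsilon> \<in> {0..}\<close> by (intro mult_left_mono) auto
  also have "\<dots> = ennreal (c * B \<epsilon>)"
    using assms(2,6) by (simp add: ennreal_mult)
  finally show "integral\<^sup>L M g \<le> c * B \<epsilon>"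
    using assms(2,6) by (intro integral_real_bounded) simp_all
qed simp

theorem theorem3:
  fixes M :: "'w measure" and \<nu> :: "real measure"
    and U U0 :: "'w \<Rightarrow> nat \<Rightarrow> real"
    and m :: nat and H0 :: "nat set" and \<alpha> :: real
    and f :: "(nat \<Rightarrow> real \<times> real) \<Rightarrow> real"
  assumes "prob_space M"
    and "sigma_finite_measure \<nu>" and "sets \<nu> = sets borel"
    and "0 < \<alpha>" and "\<alpha> < 1"
    and "H0 \<subseteq> {1..m}"
    and "\<And>x. f x \<ge> 0"
    and "distributed M (PiM {1..m} (\<lambda>_. \<nu> \<Otimes>\<^sub>M \<nu>))
           (\<lambda>\<omega>. \<lambda>i\<in>{1..m}. (U \<omega> i, U0 \<omega> i)) (\<lambda>x. ennreal (f x))"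
  defines "e \<equiv> (\<lambda>\<omega> i. evalue m \<alpha> (\<lambda>j. statG (U \<omega> j) (U0 \<omega> j)) i)"
    and "KL \<equiv> (\<lambda>i \<omega>. obsKL \<nu> f i (\<lambda>j\<in>{1..m}. (U \<omega> j, U0 \<omega> j)))"
  shows "prob_space.expectation M (\<lambda>\<omega>. \<Sum>i\<in>H0. e \<omega> i)
           \<le> (INF \<epsilon>\<in>{0..}. real m * (exp \<epsilon> +
                 (\<Sum>i\<in>H0. measure M {\<omega> \<in> space M. KL i \<omega> > ereal \<epsilon>})))
       \<and> prob_space.expectation M
           (\<lambda>\<omega>. real (card (eBH m \<alpha> (e \<omega>) \<inter> H0)) / real (max (card (eBH m \<alpha> (e \<omega>))) 1))
           \<le> (INF \<epsilon>\<in>{0..}. \<alpha> * (exp \<epsilon> +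
                 (\<Sum>i\<in>H0. measure M {\<omega> \<in> space M. KL i \<omega> > ereal \<epsilon>})))"
proof -
  define X where "X \<omega> = (\<lambda>i\<in>{1..m}. (U \<omega> i, U0 \<omega> i))" for \<omega>
  have X: "distributed M (PiM {1..m} (\<lambda>_. \<nu> \<Otimes>\<^sub>M \<nu>)) X (\<lambda>x. ennreal (f x))"
    using assms(8) unfolding X_def .
  interpret pair_density \<nu> m f
    using pair_density_of_distributed[OF assms(1-3,7) X] .
  define S where "S \<omega> = (\<Sum>i\<in>H0. loo_pos_ratio m \<alpha> (statGs (X \<omega>)) i)" for \<omega>
  have e_le: "e \<omega> i \<le> real m * loo_pos_ratio m \<alpha> (statGs (X \<omega>)) i" if "i \<in> H0" for \<omega> i
    unfolding e_def X_def using that assms(6) by (intro evalue_le_loo_pos_ratio_statGs) blast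
  have sum_e_le: "(\<Sum>i\<in>H0. e \<omega> i) \<le> real m * S \<omega>" for \<omega>
    unfolding S_def sum_distrib_left using e_le by (rule sum_mono)
  have fdp_le: "real (card (eBH m \<alpha> (e \<omega>) \<inter> H0)) / real (max (card (eBH m \<alpha> (e \<omega>))) 1)
      \<le> \<alpha> * S \<omega>" for \<omega>
    unfolding S_def
    by (rule eBH_fdp_le_sum_bound[OF assms(4,6) _ e_le]) (simp_all add: e_def evalue_def loo_pos_ratio_nonneg)
  have S_bound: "(\<integral>\<^sup>+\<omega>. ennreal (S \<omega>) \<partial>M)
      \<le> ennreal (exp \<epsilon> + (\<Sum>i\<in>H0. measure M {\<omega> \<in> space M. KL i \<omega> > ereal \<epsilon>}))" for \<epsilon>
    unfolding S_def KL_def X_def[symmetric]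
    using expectation_sum_loo_pos_ratio_le[OF assms(1) X assms(4,6)] .
  have S_measurable: "S \<in> borel_measurable M"
    unfolding S_def using assms(6) distributed_measurable[OF X] by (rule borel_measurable_sum_loo_pos_ratio)
  have S_nonneg: "0 \<le> S \<omega>" for \<omega>
    unfolding S_def by (simp add: sum_nonneg loo_pos_ratio_nonneg)
  have "0 \<le> exp \<epsilon> + (\<Sum>i\<in>H0. measure M {\<omega> \<in> space M. KL i \<omega> > ereal \<epsilon>})" for \<epsilon>
    by (simp add: add_nonneg_nonneg sum_nonneg)
  note bound = integral_le_INF_of_nn_integral_bound[OF _ _ S_nonneg S_measurable S_bound this]
  show ?thesis
    by (intro conjI bound[OF sum_e_le] bound[OF fdp_le]) (use assms(4) in simp_all)
qed

end
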